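(* Let $N=\{1,\ldots,n\}$, $\mathcal{X}=\{-1,1\}^n$, and let $\phi:\mathcal{X}\to\{-1,1\}$ be a deterministic voting rule. Let $w\in\mathbb{R}_+^n$ be a nonzero nonnegative weight vector. Then: (1) $\phi$ is a weighted majority rule (WMR) with weight vector $w$ if and only if $$\frac{\sum_{i\in N} w_i r_i(\phi,p)}{\sum_{i\in N} w_i}\ \geq\ \frac12 \quad\text{for all } p\in\Delta(\mathcal{X}).$$ (2) $\phi$ is a WMR with weight vector $w$ allowing no ties if and only if $$\frac{\sum_{i\in N} w_i r_i(\phi,p)}{\sum_{i\in N} w_i}\ >\ \frac12 \quad\text{for all } p\in\Delta(\mathcal{X}).$$
   Context: $\Delta(\mathcal{X})$ is the set of all probability distributions on $\mathcal{X}$. For $p\in\Delta(\mathcal{X})$, the responsiveness of individual $i$ is $r_i(\phi,p)=p(\{x\in\mathcal{X}:\phi(x)=x_i\})$. A deterministic voting rule $\phi$ is a weighted majority rule (WMR) with nonzero weight vector $w\in\mathbb{R}^n$ if $\phi(x)=1$ whenever $\sum_i w_ix_i>0$ and $\phi(x)=-1$ whenever $\sum_i w_ix_i<0$ (profiles with $\sum_i w_ix_i=0$, called ties, may be assigned arbitrarily). The WMR with weight vector $w$ allows no ties if $\sum_i w_ix_i\neq 0$ for every $x\in\mathcal{X}$. *)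

theory Defs
  imports Complex_Main "HOL-Library.FuncSet"
begin

text \<open>Voters are indexed by 0..n-1 (standing for N = 1..n). A profile is an
element of the extensional function space {..<n} -> {-1,1}.\<close>

definition profiles :: "nat \<Rightarrow> (nat \<Rightarrow> int) set" where
  "profiles n = PiE {..<n} (\<lambda>_. {-1, 1})"

text \<open>Delta(X): probability distributions on the finite set X, given by their
probability mass functions (values outside X are irrelevant).\<close>

definition distributions :: "nat \<Rightarrow> ((nat \<Rightarrow> int) \<Rightarrow> real) set" where
  "distributions n = {p. (\<forall>x\<in>profiles n. p x \<ge> 0) \<and> (\<Sum>x\<in>profiles n. p x) = 1}"

definition responsiveness ::
  "nat \<Rightarrow> ((nat \<Rightarrow> int) \<Rightarrow> int) \<Rightarrow> ((nat \<Rightarrow> int) \<Rightarrow> real) \<Rightarrow> nat \<Rightarrow> real" where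
  "responsiveness n \<phi> p i = (\<Sum>x\<in>{x\<in>profiles n. \<phi> x = x i}. p x)"

definition is_WMR :: "nat \<Rightarrow> (nat \<Rightarrow> real) \<Rightarrow> ((nat \<Rightarrow> int) \<Rightarrow> int) \<Rightarrow> bool" where
  "is_WMR n w \<phi> \<longleftrightarrow> (\<exists>i<n. w i \<noteq> 0) \<and>
     (\<forall>x\<in>profiles n.
        ((\<Sum>i<n. w i * real_of_int (x i)) > 0 \<longrightarrow> \<phi> x = 1) \<and>
        ((\<Sum>i<n. w i * real_of_int (x i)) < 0 \<longrightarrow> \<phi> x = -1))"

definition no_ties :: "nat \<Rightarrow> (nat \<Rightarrow> real) \<Rightarrow> bool" where
  "no_ties n w \<longleftrightarrow> (\<forall>x\<in>profiles n. (\<Sum>i<n. w i * real_of_int (x i)) \<noteq> 0)"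

end

theory Submission
  imports Defs
begin

text \<open>Since votes are \<open>\<plusminus>1\<close>, the indicator that voter \<open>i\<close> agrees with the outcome
  is \<open>(1 + \<phi>(x) x\<^sub>i) / 2\<close>, so the weighted responsiveness equals
  \<open>W/2 + E\<^sub>p[\<phi>(x) (w \<bullet> x)] / 2\<close> with \<open>W = \<Sum>\<^sub>i w\<^sub>i > 0\<close>. On the other hand, \<open>\<phi>\<close> is a
  WMR (without ties) iff \<open>\<phi>(x) (w \<bullet> x)\<close> is nonnegative (positive) at every profile,
  which by testing against point masses is the same as having nonnegative (positive)
  expectation under every distribution.\<close>

definition weighted_vote :: "nat \<Rightarrow> (nat \<Rightarrow> real) \<Rightarrow> (nat \<Rightarrow> int) \<Rightarrow> real" where
  "weighted_vote n w x = (\<Sum>i<n. w i * real_of_int (x i))"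

lemma finite_profiles: "finite (profiles n)"
  unfolding profiles_def by (auto intro!: finite_PiE)

lemma profiles_memD: "x \<in> profiles n \<Longrightarrow> i < n \<Longrightarrow> x i \<in> {-1, 1}"
  unfolding profiles_def by auto

lemma of_bool_eq_sign_product:
  assumes "a \<in> {-1, 1}" and "b \<in> {-1, 1}"
  shows "of_bool (a = b) = (1 + real_of_int a * real_of_int b) / 2"
  using assms by auto

lemma weighted_responsiveness_eq:
  assumes rule: "\<And>x. x \<in> profiles n \<Longrightarrow> \<phi> x \<in> {-1, 1}"
    and p: "(\<Sum>x\<in>profiles n. p x) = 1"
  shows "(\<Sum>i<n. w i * responsiveness n \<phi> p i) =
    (\<Sum>i<n. w i) / 2 + (\<Sum>x\<in>profiles n. p x * (real_of_int (\<phi> x) * weighted_vote n w x)) / 2"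
proof -
  let ?P = "profiles n"
  have agree: "(\<Sum>i<n. w i * of_bool (\<phi> x = x i)) =
      (\<Sum>i<n. w i) / 2 + real_of_int (\<phi> x) * weighted_vote n w x / 2" if "x \<in> ?P" for x
  proof -
    have "(\<Sum>i<n. w i * of_bool (\<phi> x = x i)) =
        (\<Sum>i<n. w i * ((1 + real_of_int (\<phi> x) * real_of_int (x i)) / 2))"
      using rule[OF that] profiles_memD[OF that] by (intro sum.cong refl) (simp add: of_bool_eq_sign_product)
    also have "\<dots> = (\<Sum>i<n. w i / 2 + real_of_int (\<phi> x) * (w i * real_of_int (x i)) / 2)"
      by (simp add: algebra_simps add_divide_distrib)
    finally show ?thesis
      by (simp add: weighted_vote_def sum.distrib sum_distrib_left sum_divide_distrib)
  qed
  have "responsiveness n \<phi> p i = (\<Sum>x\<in>?P. p x * of_bool (\<phi> x = x i))" for i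
    unfolding responsiveness_def using finite_profiles by (simp add: Int_def)
  then have "(\<Sum>i<n. w i * responsiveness n \<phi> p i) = (\<Sum>x\<in>?P. p x * (\<Sum>i<n. w i * of_bool (\<phi> x = x i)))"
    by (simp only: sum_distrib_left mult_ac) (rule sum.swap)
  also have "\<dots> = (\<Sum>x\<in>?P. p x * ((\<Sum>i<n. w i) / 2 + real_of_int (\<phi> x) * weighted_vote n w x / 2))"
    by (intro sum.cong refl) (simp only: agree)
  also have "\<dots> = (\<Sum>x\<in>?P. p x) * (\<Sum>i<n. w i) / 2
      + (\<Sum>x\<in>?P. p x * (real_of_int (\<phi> x) * weighted_vote n w x)) / 2"
    by (simp add: distrib_left sum.distrib sum_distrib_right flip: sum_divide_distrib)
  finally show ?thesis using p by simp
qed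

lemma point_mass_in_distributions:
  "x\<^sub>0 \<in> profiles n \<Longrightarrow> (\<lambda>x. of_bool (x = x\<^sub>0)) \<in> distributions n"
  unfolding distributions_def using finite_profiles by simp

lemma expectation_nonneg_iff:
  "(\<forall>p\<in>distributions n. 0 \<le> (\<Sum>x\<in>profiles n. p x * f x)) \<longleftrightarrow> (\<forall>x\<in>profiles n. 0 \<le> f x)"
proof
  assume expectation: "\<forall>p\<in>distributions n. 0 \<le> (\<Sum>x\<in>profiles n. p x * f x)"
  show "\<forall>x\<in>profiles n. 0 \<le> f x"
  proof
    fix x\<^sub>0 assume "x\<^sub>0 \<in> profiles n"
    then show "0 \<le> f x\<^sub>0"
      using bspec[OF expectation point_mass_in_distributions] finite_profiles by simp
  qed
next
  assume "\<forall>x\<in>profiles n. 0 \<le> f x"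
  then show "\<forall>p\<in>distributions n. 0 \<le> (\<Sum>x\<in>profiles n. p x * f x)"
    unfolding distributions_def by (auto intro!: sum_nonneg)
qed

lemma expectation_pos_iff:
  "(\<forall>p\<in>distributions n. 0 < (\<Sum>x\<in>profiles n. p x * f x)) \<longleftrightarrow> (\<forall>x\<in>profiles n. 0 < f x)"
proof
  assume expectation: "\<forall>p\<in>distributions n. 0 < (\<Sum>x\<in>profiles n. p x * f x)"
  show "\<forall>x\<in>profiles n. 0 < f x"
  proof
    fix x\<^sub>0 assume "x\<^sub>0 \<in> profiles n"
    then show "0 < f x\<^sub>0"
      using bspec[OF expectation point_mass_in_distributions] finite_profiles by simp
  qed
next
  assume pos: "\<forall>x\<in>profiles n. 0 < f x"
  show "\<forall>p\<in>distributions n. 0 < (\<Sum>x\<in>profiles n. p x * f x)"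
  proof
    fix p assume "p \<in> distributions n"
    then have nonneg: "\<forall>x\<in>profiles n. 0 \<le> p x" and "(\<Sum>x\<in>profiles n. p x) = 1"
      unfolding distributions_def by auto
    then obtain x\<^sub>0 where "x\<^sub>0 \<in> profiles n" "0 < p x\<^sub>0"
      by (metis less_eq_real_def sum.neutral zero_neq_one)
    then show "0 < (\<Sum>x\<in>profiles n. p x * f x)"
      using finite_profiles nonneg pos by (intro sum_pos2[of _ x\<^sub>0]) auto
  qed
qed

lemma is_WMR_iff:
  assumes rule: "\<And>x. x \<in> profiles n \<Longrightarrow> \<phi> x \<in> {-1, 1}"
    and nonzero: "\<exists>i<n. w i \<noteq> 0"
  shows "is_WMR n w \<phi> \<longleftrightarrow> (\<forall>x\<in>profiles n. 0 \<le> real_of_int (\<phi> x) * weighted_vote n w x)"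
proof -
  have "((weighted_vote n w x > 0 \<longrightarrow> \<phi> x = 1) \<and> (weighted_vote n w x < 0 \<longrightarrow> \<phi> x = -1))
      \<longleftrightarrow> 0 \<le> real_of_int (\<phi> x) * weighted_vote n w x" if "x \<in> profiles n" for x
    using rule[OF that] by (auto simp: zero_le_mult_iff)
  then show ?thesis
    unfolding is_WMR_def weighted_vote_def[symmetric] using nonzero by auto
qed

lemma is_WMR_no_ties_iff:
  assumes rule: "\<And>x. x \<in> profiles n \<Longrightarrow> \<phi> x \<in> {-1, 1}"
    and nonzero: "\<exists>i<n. w i \<noteq> 0"
  shows "is_WMR n w \<phi> \<and> no_ties n w \<longleftrightarrow>
    (\<forall>x\<in>profiles n. 0 < real_of_int (\<phi> x) * weighted_vote n w x)"
proof -
  have "real_of_int (\<phi> x) \<noteq> 0" if "x \<in> profiles n" for x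
    using rule[OF that] by auto
  then show ?thesis
    using is_WMR_iff[where \<phi>=\<phi>, OF rule nonzero] unfolding no_ties_def weighted_vote_def[symmetric]
    by (auto simp: less_le)
qed

theorem lemma2:
  fixes n :: nat and \<phi> :: "(nat \<Rightarrow> int) \<Rightarrow> int" and w :: "nat \<Rightarrow> real"
  assumes rule: "\<And>x. x \<in> profiles n \<Longrightarrow> \<phi> x \<in> {-1, 1}"
    and nonneg: "\<And>i. i < n \<Longrightarrow> w i \<ge> 0"
    and nonzero: "\<exists>i<n. w i \<noteq> 0"
  shows "(is_WMR n w \<phi> \<longleftrightarrow>
           (\<forall>p\<in>distributions n.
              (\<Sum>i<n. w i * responsiveness n \<phi> p i) / (\<Sum>i<n. w i) \<ge> 1/2))
       \<and> (is_WMR n w \<phi> \<and> no_ties n w \<longleftrightarrow>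
           (\<forall>p\<in>distributions n.
              (\<Sum>i<n. w i * responsiveness n \<phi> p i) / (\<Sum>i<n. w i) > 1/2))"
proof -
  define E where "E p = (\<Sum>x\<in>profiles n. p x * (real_of_int (\<phi> x) * weighted_vote n w x))" for p
  obtain j where "j < n" "w j \<noteq> 0" using nonzero by auto
  then have W_pos: "0 < (\<Sum>i<n. w i)"
    using nonneg by (intro sum_pos2[of _ j]) (auto simp: less_le)
  have "(\<Sum>i<n. w i * responsiveness n \<phi> p i) / (\<Sum>i<n. w i) = 1/2 + E p / (2 * (\<Sum>i<n. w i))"
    if "p \<in> distributions n" for p
    using weighted_responsiveness_eq[OF rule, where p=p and w=w] that W_pos
    unfolding E_def distributions_def by (simp add: field_simps)
  then have ge: "(\<Sum>i<n. w i * responsiveness n \<phi> p i) / (\<Sum>i<n. w i) \<ge> 1/2 \<longleftrightarrow> 0 \<le> E p"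
    and gt: "(\<Sum>i<n. w i * responsiveness n \<phi> p i) / (\<Sum>i<n. w i) > 1/2 \<longleftrightarrow> 0 < E p"
    if "p \<in> distributions n" for p
    using that W_pos by (simp_all add: field_simps)
  have "(\<forall>p\<in>distributions n. (\<Sum>i<n. w i * responsiveness n \<phi> p i) / (\<Sum>i<n. w i) \<ge> 1/2)
      \<longleftrightarrow> (\<forall>p\<in>distributions n. 0 \<le> E p)"
    and "(\<forall>p\<in>distributions n. (\<Sum>i<n. w i * responsiveness n \<phi> p i) / (\<Sum>i<n. w i) > 1/2)
      \<longleftrightarrow> (\<forall>p\<in>distributions n. 0 < E p)"
    using ge gt by blast+
  then show ?thesis
    unfolding E_def expectation_nonneg_iff expectation_pos_iff
    using is_WMR_iff[where \<phi>=\<phi>, OF rule nonzero] is_WMR_no_ties_iff[where \<phi>=\<phi>, OF rule nonzero] by blast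
qed

end
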